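(* Let $K$ be a field of characteristic $0$ and let $\mathcal{U}$ be the variety of $K$-algebras that are alternative and satisfy $(ab)c=(ba)c$. For $n\ge1$ let $U_n$ denote the multilinear component of degree $n$ of the free $\mathcal{U}$-algebra on $x_1,\dots,x_n$. Then a basis of $U_n$ is given by: \begin{itemize} \item $n=1$: $x_1$; \quad $n=2$: $x_1x_2,\ x_2x_1$; \item $n=3$: $(x_1x_2)x_3,\ (x_1x_3)x_2,\ x_3(x_1x_2),\ x_3(x_2x_1)$; \item $n\ge4$: the $n$ left-normed monomials $((\cdots((x_{i_1}x_{i_2})x_{i_3})\cdots)x_{i_{n-1}})x_k$, $k=1,\dots,n$, where $i_1<\cdots<i_{n-1}$ is the increasing enumeration of $\{1,\dots,n\}\setminus\{k\}$. \end{itemize}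
   Context: An algebra is alternative if $(a,a,b)=0=(a,b,b)$ for all $a,b$, where $(a,b,c)=(ab)c-a(bc)$. This variety $\mathcal{U}$ is the Koszul dual (Ginzburg–Kapranov) of the variety $\mathcal{LS}_{\mathfrak{A}_2}$ of left-symmetric algebras (those with $(a,b,c)=(b,a,c)$) satisfying additionally $a(bc)+b(ac)+a(cb)+c(ab)+b(ca)+c(ba)=0$. *)

theory Defs
  imports Main
begin

text \<open>Nonassociative monomials in variables x_i (i :: nat): binary trees.\<close>
datatype tree = Leaf nat | Node tree tree

fun leaves :: "tree \<Rightarrow> nat list" where
  "leaves (Leaf i) = [i]"
| "leaves (Node l r) = leaves l @ leaves r"

text \<open>Nonassociative polynomials over K: coefficient functions on monomials
  (finite support is imposed by the predicate ncpoly).\<close>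
type_synonym 'a npoly = "tree \<Rightarrow> 'a"

definition ncpoly :: "nat set \<Rightarrow> 'a::zero npoly \<Rightarrow> bool" where
  "ncpoly V p \<longleftrightarrow> finite {t. p t \<noteq> 0} \<and> (\<forall>t. p t \<noteq> 0 \<longrightarrow> set (leaves t) \<subseteq> V)"

definition padd :: "'a::ring npoly \<Rightarrow> 'a npoly \<Rightarrow> 'a npoly" where
  "padd p q = (\<lambda>t. p t + q t)"

definition pminus :: "'a::ring npoly \<Rightarrow> 'a npoly \<Rightarrow> 'a npoly" where
  "pminus p q = (\<lambda>t. p t - q t)"

definition psmul :: "'a::ring \<Rightarrow> 'a npoly \<Rightarrow> 'a npoly" where
  "psmul c p = (\<lambda>t. c * p t)"

definition pmul :: "'a::ring npoly \<Rightarrow> 'a npoly \<Rightarrow> 'a npoly" where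
  "pmul p q = (\<lambda>t. case t of Leaf _ \<Rightarrow> 0 | Node l r \<Rightarrow> p l * q r)"

definition monom :: "tree \<Rightarrow> 'a::ring_1 npoly" where
  "monom t = (\<lambda>s. if s = t then 1 else 0)"

definition assoc :: "'a::ring npoly \<Rightarrow> 'a npoly \<Rightarrow> 'a npoly \<Rightarrow> 'a npoly" where
  "assoc p q r = pminus (pmul (pmul p q) r) (pmul p (pmul q r))"

text \<open>The verbal (T-)ideal of the free nonassociative algebra on the variables V
  defining the variety U: the ideal generated by all values (a,a,b), (a,b,b),
  (ab)c-(ba)c on elements a,b,c of the free algebra.\<close>
inductive_set Uideal :: "nat set \<Rightarrow> 'a::field npoly set" for V where
  alt_left: "ncpoly V a \<Longrightarrow> ncpoly V b \<Longrightarrow> assoc a a b \<in> Uideal V"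
| alt_right: "ncpoly V a \<Longrightarrow> ncpoly V b \<Longrightarrow> assoc a b b \<in> Uideal V"
| comm_left: "ncpoly V a \<Longrightarrow> ncpoly V b \<Longrightarrow> ncpoly V c \<Longrightarrow>
     pminus (pmul (pmul a b) c) (pmul (pmul b a) c) \<in> Uideal V"
| zero: "(\<lambda>t. 0) \<in> Uideal V"
| add: "p \<in> Uideal V \<Longrightarrow> q \<in> Uideal V \<Longrightarrow> padd p q \<in> Uideal V"
| smul: "p \<in> Uideal V \<Longrightarrow> psmul c p \<in> Uideal V"
| lmul: "p \<in> Uideal V \<Longrightarrow> ncpoly V r \<Longrightarrow> pmul r p \<in> Uideal V"
| rmul: "p \<in> Uideal V \<Longrightarrow> ncpoly V r \<Longrightarrow> pmul p r \<in> Uideal V"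

definition multilinear :: "nat \<Rightarrow> tree \<Rightarrow> bool" where
  "multilinear n t \<longleftrightarrow> distinct (leaves t) \<and> set (leaves t) = {1..n}"

definition lin_comb :: "(nat \<Rightarrow> 'a::ring) \<Rightarrow> tree list \<Rightarrow> 'a npoly" where
  "lin_comb c B = (\<lambda>t. \<Sum>j<length B. if B ! j = t then c j else 0)"

fun lnorm :: "nat list \<Rightarrow> tree" where
  "lnorm [] = Leaf 0"
| "lnorm (x # xs) = foldl (\<lambda>t i. Node t (Leaf i)) (Leaf x) xs"

definition basisU :: "nat \<Rightarrow> tree list" where
  "basisU n =
    (if n = 1 then [Leaf 1]
     else if n = 2 then [Node (Leaf 1) (Leaf 2), Node (Leaf 2) (Leaf 1)]
     else if n = 3 then [Node (Node (Leaf 1) (Leaf 2)) (Leaf 3),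
                         Node (Node (Leaf 1) (Leaf 3)) (Leaf 2),
                         Node (Leaf 3) (Node (Leaf 1) (Leaf 2)),
                         Node (Leaf 3) (Node (Leaf 2) (Leaf 1))]
     else map (\<lambda>k. lnorm (filter (\<lambda>i. i \<noteq> k) [1..<n+1] @ [k])) [1..<n+1])"

end

theory Submission
  imports Defs "HOL.Modules" "HOL-Library.Product_Plus" "HOL-Library.Multiset"
begin

text \<open>Modulo the identities of \<open>U\<close> the associator is alternating and \<open>(ab)c = (ba)c\<close>.
  In characteristic 0 this forces \<open>(x, y, z)w = 0\<close> and, through the Teichm\<ouml>ller identity,
  \<open>(x, y, z) = 0\<close> whenever one argument is a product. Hence a multilinear monomial of degree
  \<open>n \<ge> 4\<close> can be reassociated to a left-normed one, in which all letters but the last commute;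
  in degree 3 the three monomials \<open>(ab)c\<close> with \<open>a < b\<close> and one associator span.
  Independence is seen by evaluating in two algebras of \<open>U\<close>: in the associative algebra
  \<open>K\<^sup>2\<close> with \<open>(a, b)(c, d) = (ac, ad)\<close> the indicator of the letter \<open>k\<close> detects the
  monomials ending in \<open>k\<close>, and an algebra built from the cross and dot products on \<open>K\<^sup>3\<close>
  separates \<open>x\<^sub>3(x\<^sub>1x\<^sub>2)\<close> from \<open>x\<^sub>3(x\<^sub>2x\<^sub>1)\<close>.\<close>

section \<open>Arithmetic of nonassociative polynomials\<close>

lemma support_pmul_subset:
  "{t. pmul p q t \<noteq> 0} \<subseteq> (\<lambda>(l, r). Node l r) ` ({t. p t \<noteq> 0} \<times> {t. q t \<noteq> 0})"
proof
  fix t assume "t \<in> {t. pmul p q t \<noteq> 0}"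
  then show "t \<in> (\<lambda>(l, r). Node l r) ` ({t. p t \<noteq> 0} \<times> {t. q t \<noteq> 0})"
    by (cases t) (auto simp: pmul_def)
qed

lemma finite_support_pmul:
  "finite {t. p t \<noteq> 0} \<Longrightarrow> finite {t. q t \<noteq> 0} \<Longrightarrow> finite {t. pmul p q t \<noteq> 0}"
  by (rule finite_subset[OF support_pmul_subset]) auto

lemma ncpoly_padd: "ncpoly V p \<Longrightarrow> ncpoly V q \<Longrightarrow> ncpoly V (padd p q)"
  unfolding ncpoly_def padd_def
  by (auto intro: finite_subset[of _ "{t. p t \<noteq> 0} \<union> {t. q t \<noteq> 0}"])
    (metis add.left_neutral add.right_neutral subsetD)

lemma ncpoly_psmul: "ncpoly V p \<Longrightarrow> ncpoly V (psmul c p)"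
  unfolding ncpoly_def psmul_def
  by (auto intro: finite_subset[of _ "{t. p t \<noteq> 0}"]) (metis mult_zero_right subsetD)

lemma pminus_eq_padd_psmul: "pminus p q = padd p (psmul (-1) (q :: 'a::ring_1 npoly))"
  by (simp add: pminus_def padd_def psmul_def fun_eq_iff)

lemma ncpoly_pminus: "ncpoly V p \<Longrightarrow> ncpoly V q \<Longrightarrow> ncpoly V (pminus p (q :: 'a::ring_1 npoly))"
  unfolding pminus_eq_padd_psmul by (intro ncpoly_padd ncpoly_psmul)

lemma ncpoly_pmul: assumes "ncpoly V p" "ncpoly V q" shows "ncpoly V (pmul p q)"
  unfolding ncpoly_def
proof (intro conjI allI impI)
  show "finite {t. pmul p q t \<noteq> 0}"
    using assms by (intro finite_support_pmul) (auto simp: ncpoly_def)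
next
  fix t assume "pmul p q t \<noteq> 0"
  then obtain l r where t: "t = Node l r" and "p l * q r \<noteq> 0"
    by (cases t) (auto simp: pmul_def)
  then have "p l \<noteq> 0" "q r \<noteq> 0" by auto
  then show "set (leaves t) \<subseteq> V" using assms t by (auto simp: ncpoly_def)
qed

lemma ncpoly_finite: "ncpoly V p \<Longrightarrow> finite {t. p t \<noteq> 0}"
  by (simp add: ncpoly_def)

lemma ncpoly_zero: "ncpoly V (\<lambda>t. 0)"
  by (simp add: ncpoly_def)

lemma ncpoly_monom: "set (leaves t) \<subseteq> V \<Longrightarrow> ncpoly V (monom t)"
  by (simp add: ncpoly_def monom_def)

lemmas ncpoly_intros = ncpoly_zero ncpoly_padd ncpoly_psmul ncpoly_pminus ncpoly_pmul ncpoly_monom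

lemma pmul_padd_left: "pmul (padd p q) r = padd (pmul p r) (pmul q r)"
  and pmul_padd_right: "pmul r (padd p q) = padd (pmul r p) (pmul r q)"
  and pmul_pminus_left: "pmul (pminus p q) r = pminus (pmul p r) (pmul q r)"
  and pmul_pminus_right: "pmul r (pminus p q) = pminus (pmul r p) (pmul r q)"
  and pmul_psmul_left: "pmul (psmul c p) r = psmul c (pmul p r)"
  and pmul_psmul_right: "pmul r (psmul (c :: 'a::comm_ring) p) = psmul c (pmul r p)"
  by (auto simp: fun_eq_iff pmul_def padd_def pminus_def psmul_def algebra_simps split: tree.split)

lemmas pmul_bilinear = pmul_padd_left pmul_padd_right pmul_pminus_left pmul_pminus_right
  pmul_psmul_left pmul_psmul_right

lemma pmul_monom: "pmul (monom a) (monom b) = (monom (Node a b) :: 'a::ring_1 npoly)"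
  by (auto simp: fun_eq_iff pmul_def monom_def split: tree.split)

definition pcomm :: "'a::ring npoly \<Rightarrow> 'a npoly \<Rightarrow> 'a npoly" where
  "pcomm p q = pminus (pmul p q) (pmul q p)"

lemma ncpoly_pcomm: "ncpoly V p \<Longrightarrow> ncpoly V q \<Longrightarrow> ncpoly V (pcomm p (q :: 'a::ring_1 npoly))"
  unfolding pcomm_def by (intro ncpoly_pminus ncpoly_pmul)

lemmas npoly_expand = assoc_def pcomm_def pmul_bilinear
lemmas npoly_pointwise = fun_eq_iff padd_def pminus_def psmul_def

lemma Uideal_pminus: "p \<in> Uideal V \<Longrightarrow> q \<in> Uideal V \<Longrightarrow> pminus p q \<in> Uideal V"
  unfolding pminus_eq_padd_psmul by (intro Uideal.add Uideal.smul)

lemma Uideal_smul_cancel: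
  assumes "psmul c (p :: 'a::field npoly) \<in> Uideal V" "c \<noteq> 0" shows "p \<in> Uideal V"
proof -
  have "psmul (inverse c) (psmul c p) = p" using assms(2) by (simp add: psmul_def mult.assoc[symmetric])
  with Uideal.smul[OF assms(1)] show ?thesis by metis
qed

lemma ncpoly_Uideal: "p \<in> Uideal V \<Longrightarrow> ncpoly V p"
  by (induction rule: Uideal.induct) (auto intro: ncpoly_intros simp: assoc_def)

lemma finite_support_Uideal: "p \<in> Uideal V \<Longrightarrow> finite {t. p t \<noteq> 0}"
  using ncpoly_Uideal ncpoly_finite by blast

section \<open>Consequences of the identities of \<open>U\<close>\<close>

context
  fixes V :: "nat set"
begin

lemma U_assoc_skew_left:
  assumes "ncpoly V a" "ncpoly V b" "ncpoly V c"
  shows "padd (assoc a b c) (assoc b a c) \<in> (Uideal V :: 'a::field npoly set)"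
proof -
  have "pminus (pminus (assoc (padd a b) (padd a b) c) (assoc a a c)) (assoc b b c) \<in> Uideal V"
    using assms by (intro Uideal_pminus Uideal.alt_left ncpoly_padd)
  moreover have "pminus (pminus (assoc (padd a b) (padd a b) c) (assoc a a c)) (assoc b b c)
      = padd (assoc a b c) (assoc b a c)"
    by (simp only: npoly_expand) (simp add: npoly_pointwise)
  ultimately show ?thesis by simp
qed

lemma U_assoc_skew_right:
  assumes "ncpoly V a" "ncpoly V b" "ncpoly V c"
  shows "padd (assoc a b c) (assoc a c b) \<in> (Uideal V :: 'a::field npoly set)"
proof -
  have "pminus (pminus (assoc a (padd b c) (padd b c)) (assoc a b b)) (assoc a c c) \<in> Uideal V"
    using assms by (intro Uideal_pminus Uideal.alt_right ncpoly_padd)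
  moreover have "pminus (pminus (assoc a (padd b c) (padd b c)) (assoc a b b)) (assoc a c c)
      = padd (assoc a b c) (assoc a c b)"
    by (simp only: npoly_expand) (simp add: npoly_pointwise)
  ultimately show ?thesis by simp
qed

lemma U_pcomm_mult:
  assumes "ncpoly V a" "ncpoly V b" "ncpoly V c"
  shows "pmul (pcomm a b) c \<in> (Uideal V :: 'a::field npoly set)"
  using Uideal.comm_left[OF assms] by (simp add: pcomm_def pmul_bilinear)

lemma U_assoc_cyclic:
  assumes "ncpoly V a" "ncpoly V b" "ncpoly V c"
  shows "pminus (assoc a b c) (assoc b c a) \<in> (Uideal V :: 'a::field npoly set)"
proof -
  have "pminus (padd (assoc a b c) (assoc b a c)) (padd (assoc b a c) (assoc b c a)) \<in> Uideal V"
    using assms by (intro Uideal_pminus U_assoc_skew_left U_assoc_skew_right)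
  moreover have "pminus (padd (assoc a b c) (assoc b a c)) (padd (assoc b a c) (assoc b c a))
      = pminus (assoc a b c) (assoc b c a)"
    by (simp add: npoly_pointwise)
  ultimately show ?thesis by simp
qed

lemma U_mult_exchange:
  assumes "ncpoly V a" "ncpoly V b" "ncpoly V c"
  shows "padd (pminus (pmul a (pmul b c)) (pmul b (pmul a c))) (psmul 2 (assoc a b c))
    \<in> (Uideal V :: 'a::field npoly set)"
proof -
  have "padd (pmul (pcomm a b) c) (padd (assoc a b c) (assoc b a c)) \<in> Uideal V"
    using assms by (intro Uideal.add U_assoc_skew_left U_pcomm_mult)
  moreover have "padd (pmul (pcomm a b) c) (padd (assoc a b c) (assoc b a c))
      = padd (pminus (pmul a (pmul b c)) (pmul b (pmul a c))) (psmul 2 (assoc a b c))"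
    by (simp only: npoly_expand) (simp add: npoly_pointwise algebra_simps)
  ultimately show ?thesis by simp
qed

lemma U_mult_pcomm_mult:
  assumes "ncpoly V x" "ncpoly V y" "ncpoly V z" "ncpoly V w"
  shows "pmul (pmul x (pcomm y z)) w \<in> (Uideal V :: 'a::field npoly set)"
proof -
  have "padd (pmul (pcomm x (pcomm y z)) w) (pmul (pmul (pcomm y z) x) w) \<in> Uideal V"
    using assms by (intro Uideal.add U_pcomm_mult Uideal.rmul ncpoly_pcomm)
  moreover have "padd (pmul (pcomm x (pcomm y z)) w) (pmul (pmul (pcomm y z) x) w)
      = pmul (pmul x (pcomm y z)) w"
    by (simp only: pcomm_def pmul_bilinear) (simp add: npoly_pointwise)
  ultimately show ?thesis by simp
qed

text \<open>The sum of the cyclic permutations of \<open>U_mult_exchange\<close> is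
  \<open>x[y, z] + y[z, x] + z[x, y] + 6(x, y, z)\<close>, and right multiplication kills each \<open>x[y, z]\<close>.\<close>
lemma U_assoc_left_factor:
  assumes "ncpoly V x" "ncpoly V y" "ncpoly V z" "ncpoly V w"
  shows "pmul (assoc x y z) w \<in> (Uideal V :: 'a::field_char_0 npoly set)"
proof -
  let ?S = "padd (padd (pmul x (pcomm y z)) (pmul y (pcomm z x))) (pmul z (pcomm x y))"
  let ?E = "padd (padd (padd (padd
     (padd (pminus (pmul x (pmul y z)) (pmul y (pmul x z))) (psmul 2 (assoc x y z)))
     (padd (pminus (pmul z (pmul x y)) (pmul x (pmul z y))) (psmul 2 (assoc z x y))))
     (padd (pminus (pmul y (pmul z x)) (pmul z (pmul y x))) (psmul 2 (assoc y z x))))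
     (psmul (-2) (pminus (assoc z x y) (assoc x y z))))
     (psmul 2 (pminus (assoc x y z) (assoc y z x)))"
  have "?E \<in> Uideal V"
    using assms by (intro Uideal.add Uideal.smul U_mult_exchange U_assoc_cyclic)
  moreover have "?E = padd ?S (psmul 6 (assoc x y z))"
    by (simp only: npoly_expand) (simp add: npoly_pointwise algebra_simps)
  ultimately have "pmul (padd ?S (psmul 6 (assoc x y z))) w \<in> Uideal V"
    using assms(4) by (simp add: Uideal.rmul)
  moreover have "pmul ?S w \<in> Uideal V"
    unfolding pmul_padd_left using assms by (intro Uideal.add U_mult_pcomm_mult)
  ultimately have "pminus (pmul (padd ?S (psmul 6 (assoc x y z))) w) (pmul ?S w) \<in> Uideal V"
    by (rule Uideal_pminus)
  moreover have "pminus (pmul (padd ?S (psmul 6 (assoc x y z))) w) (pmul ?S w)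
      = psmul 6 (pmul (assoc x y z) w)"
    by (simp only: pmul_bilinear) (simp add: npoly_pointwise)
  ultimately show ?thesis by (auto elim: Uideal_smul_cancel)
qed

lemma U_assoc_pcomm_first:
  assumes "ncpoly V p" "ncpoly V q" "ncpoly V r" "ncpoly V s"
  shows "pminus (assoc (pmul p q) r s) (assoc (pmul q p) r s) \<in> (Uideal V :: 'a::field npoly set)"
proof -
  have "pminus (pmul (pmul (pcomm p q) r) s) (pmul (pcomm p q) (pmul r s)) \<in> Uideal V"
    using assms by (intro Uideal_pminus U_pcomm_mult Uideal.rmul ncpoly_pmul)
  moreover have "pminus (pmul (pmul (pcomm p q) r) s) (pmul (pcomm p q) (pmul r s))
      = pminus (assoc (pmul p q) r s) (assoc (pmul q p) r s)"
    by (simp only: npoly_expand) (simp add: npoly_pointwise)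
  ultimately show ?thesis by simp
qed

text \<open>The Teichm\<ouml>ller identity \<open>(ab, c, d) - (a, bc, d) + (a, b, cd) = a(b, c, d) + (a, b, c)d\<close>
  holds in every algebra; modulo \<open>(x, y, z)w = 0\<close> and the symmetries of the associator it
  becomes \<open>teichmuller a b c d \<equiv> 0\<close>.\<close>
definition teichmuller :: "'a::ring npoly \<Rightarrow> 'a npoly \<Rightarrow> 'a npoly \<Rightarrow> 'a npoly \<Rightarrow> 'a npoly" where
  "teichmuller a b c d = pminus (padd (padd (assoc (pmul a b) c d) (assoc (pmul b c) a d))
     (assoc (pmul c d) a b)) (pmul a (assoc b c d))"

lemma U_teichmuller:
  assumes "ncpoly V a" "ncpoly V b" "ncpoly V c" "ncpoly V d"
  shows "teichmuller a b c d \<in> (Uideal V :: 'a::field_char_0 npoly set)"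
proof -
  let ?E = "pminus (padd (pmul (assoc a b c) d) (padd (assoc a (pmul b c) d) (assoc (pmul b c) a d)))
     (padd (pminus (assoc a b (pmul c d)) (assoc b (pmul c d) a))
       (pminus (assoc b (pmul c d) a) (assoc (pmul c d) a b)))"
  have "?E \<in> Uideal V"
    using assms by (intro Uideal_pminus Uideal.add U_assoc_left_factor U_assoc_skew_left
        U_assoc_cyclic ncpoly_pmul)
  moreover have "?E = teichmuller a b c d"
    unfolding teichmuller_def by (simp only: npoly_expand) (simp add: npoly_pointwise)
  ultimately show ?thesis by simp
qed

text \<open>Four instances of the Teichm\<ouml>ller relation combine to \<open>2(xy, z, w)\<close>.\<close>
lemma U_assoc_product_first:
  assumes "ncpoly V x" "ncpoly V y" "ncpoly V z" "ncpoly V w"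
  shows "assoc (pmul x y) z w \<in> (Uideal V :: 'a::field_char_0 npoly set)"
proof -
  let ?E = "padd (padd (pminus (pminus (pminus (pminus
     (pminus (pminus (padd (teichmuller z w x y) (teichmuller w y z x))
       (teichmuller z y w x)) (teichmuller w z x y))
     (pminus (assoc (pmul z w) x y) (assoc (pmul w z) x y)))
     (pminus (assoc (pmul w y) z x) (assoc (pmul y w) z x)))
     (pminus (assoc (pmul y z) w x) (assoc (pmul z y) w x)))
     (pmul z (pminus (assoc y w x) (assoc w x y))))
     (pmul w (pminus (assoc y z x) (assoc z x y))))
     (padd (assoc (pmul x y) z w) (assoc (pmul x y) w z))"
  have "?E \<in> Uideal V"
    using assms by (intro Uideal_pminus Uideal.add U_teichmuller U_assoc_pcomm_first
        Uideal.lmul U_assoc_cyclic U_assoc_skew_right ncpoly_pmul)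
  moreover have "?E = psmul 2 (assoc (pmul x y) z w)"
    unfolding teichmuller_def by (simp only: npoly_expand) (simp add: npoly_pointwise)
  ultimately show ?thesis by (auto elim: Uideal_smul_cancel)
qed

lemma U_assoc_product_second:
  assumes "ncpoly V x" "ncpoly V y" "ncpoly V z" "ncpoly V w"
  shows "assoc x (pmul y z) w \<in> (Uideal V :: 'a::field_char_0 npoly set)"
proof -
  have "pminus (padd (assoc x (pmul y z) w) (assoc (pmul y z) x w)) (assoc (pmul y z) x w) \<in> Uideal V"
    using assms by (intro Uideal_pminus U_assoc_skew_left U_assoc_product_first ncpoly_pmul)
  then show ?thesis by (simp add: npoly_pointwise)
qed

lemma U_assoc_product_third:
  assumes "ncpoly V x" "ncpoly V y" "ncpoly V z" "ncpoly V w"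
  shows "assoc x y (pmul z w) \<in> (Uideal V :: 'a::field_char_0 npoly set)"
proof -
  have "padd (padd (pminus (assoc x y (pmul z w)) (assoc y (pmul z w) x))
      (pminus (assoc y (pmul z w) x) (assoc (pmul z w) x y))) (assoc (pmul z w) x y) \<in> Uideal V"
    using assms by (intro Uideal.add U_assoc_cyclic U_assoc_product_first ncpoly_pmul)
  then show ?thesis by (simp add: npoly_pointwise)
qed

lemma U_left_normed_swap:
  assumes "ncpoly V a" "ncpoly V b" "ncpoly V c" "ncpoly V d"
  shows "pminus (pmul (pmul (pmul a b) c) d) (pmul (pmul (pmul a c) b) d)
    \<in> (Uideal V :: 'a::field_char_0 npoly set)"
proof -
  let ?E = "padd (pminus (pmul (assoc a b c) d) (pmul (assoc a c b) d)) (pmul (pmul a (pcomm b c)) d)"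
  have "?E \<in> Uideal V"
    using assms by (intro Uideal_pminus Uideal.add U_assoc_left_factor U_mult_pcomm_mult)
  moreover have "?E = pminus (pmul (pmul (pmul a b) c) d) (pmul (pmul (pmul a c) b) d)"
    by (simp only: npoly_expand) (simp add: npoly_pointwise)
  ultimately show ?thesis by simp
qed

end

section \<open>Reduction to left-normed monomials\<close>

text \<open>The \<open>itself\<close> argument fixes the coefficient field, which the two monomials do not determine.\<close>
abbreviation monom_cong :: "'a::field itself \<Rightarrow> nat set \<Rightarrow> tree \<Rightarrow> tree \<Rightarrow> bool" where
  "monom_cong T V s t \<equiv> (pminus (monom s) (monom t) :: 'a npoly) \<in> Uideal V"

lemma monom_cong_refl: "monom_cong TYPE('a::field) V t t"
  using Uideal.zero by (simp add: pminus_def)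

lemma monom_cong_sym: "monom_cong TYPE('a::field) V s t \<Longrightarrow> monom_cong TYPE('a) V t s"
  by (drule Uideal.smul[where c = "-1"]) (simp add: pminus_def psmul_def fun_eq_iff)

lemma monom_cong_trans:
  "monom_cong TYPE('a::field) V s t \<Longrightarrow> monom_cong TYPE('a) V t u \<Longrightarrow> monom_cong TYPE('a) V s u"
  by (drule (1) Uideal.add) (simp add: pminus_def padd_def fun_eq_iff)

lemma monom_cong_Node_left:
  "monom_cong TYPE('a::field) V l l' \<Longrightarrow> set (leaves r) \<subseteq> V
    \<Longrightarrow> monom_cong TYPE('a) V (Node l r) (Node l' r)"
  by (drule Uideal.rmul[where r = "monom r"]) (auto simp: pmul_bilinear pmul_monom ncpoly_monom)

lemma monom_cong_comm:
  assumes "set (leaves a) \<subseteq> V" "set (leaves b) \<subseteq> V" "set (leaves c) \<subseteq> V"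
  shows "monom_cong TYPE('a::field) V (Node (Node a b) c) (Node (Node b a) c)"
  using U_pcomm_mult[OF ncpoly_monom ncpoly_monom ncpoly_monom, OF assms, where 'a = 'a]
  by (simp add: pcomm_def pmul_bilinear pmul_monom)

lemma monom_cong_swap:
  assumes "set (leaves a) \<subseteq> V" "set (leaves b) \<subseteq> V" "set (leaves c) \<subseteq> V" "set (leaves d) \<subseteq> V"
  shows "monom_cong TYPE('a::field_char_0) V (Node (Node (Node a b) c) d) (Node (Node (Node a c) b) d)"
  using U_left_normed_swap[OF ncpoly_monom ncpoly_monom ncpoly_monom ncpoly_monom, OF assms,
      where 'a = 'a]
  by (simp add: pmul_monom)

lemma monom_cong_assoc_left_factor:
  assumes "set (leaves a) \<subseteq> V" "set (leaves b) \<subseteq> V" "set (leaves c) \<subseteq> V" "set (leaves d) \<subseteq> V"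
  shows "monom_cong TYPE('a::field_char_0) V (Node (Node (Node a b) c) d) (Node (Node a (Node b c)) d)"
  using U_assoc_left_factor[OF ncpoly_monom ncpoly_monom ncpoly_monom ncpoly_monom, OF assms,
      where 'a = 'a]
  by (simp add: assoc_def pmul_bilinear pmul_monom)

lemma length_leaves_pos: "0 < length (leaves t)"
  by (induction t) auto

lemma length_leaves_eq_1: "length (leaves t) = 1 \<Longrightarrow> \<exists>a. t = Leaf a"
proof (cases t)
  case (Node l r)
  moreover assume "length (leaves t) = 1"
  ultimately show ?thesis
    using length_leaves_pos[of l] length_leaves_pos[of r] by (auto simp del: length_greater_0_conv)
qed simp

lemma length_leaves_eq_2: "length (leaves t) = 2 \<Longrightarrow> \<exists>a b. t = Node (Leaf a) (Leaf b)"
proof (cases t)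
  case (Node l r)
  moreover assume "length (leaves t) = 2"
  ultimately have "length (leaves l) = 1" "length (leaves r) = 1"
    using length_leaves_pos[of l] length_leaves_pos[of r] by (auto simp del: length_greater_0_conv)
  with Node show ?thesis using length_leaves_eq_1 by blast
qed simp

lemma length_leaves_eq_3:
  assumes "length (leaves t) = 3"
  obtains a b c where "t = Node (Node (Leaf a) (Leaf b)) (Leaf c)"
    | a b c where "t = Node (Leaf a) (Node (Leaf b) (Leaf c))"
proof (cases t)
  case (Node l r)
  with assms have "length (leaves l) = 2 \<and> length (leaves r) = 1 \<or> length (leaves l) = 1 \<and> length (leaves r) = 2"
    using length_leaves_pos[of l] length_leaves_pos[of r] by (simp del: length_greater_0_conv) arith
  with Node that show ?thesis using length_leaves_eq_1 length_leaves_eq_2 by blast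
qed (use assms in simp)

lemma monom_cong_reassoc:
  assumes "set (leaves x) \<subseteq> V" "set (leaves u) \<subseteq> V" "set (leaves v) \<subseteq> V"
    and "4 \<le> length (leaves x) + length (leaves u) + length (leaves v)"
  shows "monom_cong TYPE('a::field_char_0) V (Node x (Node u v)) (Node (Node x u) v)"
proof -
  have "(assoc (monom x) (monom u) (monom v) :: 'a npoly) \<in> Uideal V"
  proof (cases x)
    case (Node x1 x2)
    with assms U_assoc_product_first[OF ncpoly_monom ncpoly_monom ncpoly_monom ncpoly_monom,
        of x1 V x2 u v, where 'a = 'a]
    show ?thesis by (simp add: pmul_monom)
  next
    case (Leaf i)
    show ?thesis
    proof (cases u)
      case (Node u1 u2)
      with assms U_assoc_product_second[OF ncpoly_monom ncpoly_monom ncpoly_monom ncpoly_monom,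
          of x V u1 u2 v, where 'a = 'a]
      show ?thesis by (simp add: pmul_monom)
    next
      case (Leaf j)
      with \<open>x = Leaf i\<close> assms obtain v1 v2 where "v = Node v1 v2" by (cases v) auto
      with assms U_assoc_product_third[OF ncpoly_monom ncpoly_monom ncpoly_monom ncpoly_monom,
          of x V u v1 v2, where 'a = 'a]
      show ?thesis by (simp add: pmul_monom)
    qed
  qed
  then have "monom_cong TYPE('a) V (Node (Node x u) v) (Node x (Node u v))"
    by (simp add: assoc_def pmul_monom)
  then show ?thesis by (rule monom_cong_sym)
qed

definition rmul_leaves :: "tree \<Rightarrow> nat list \<Rightarrow> tree" where
  "rmul_leaves t xs = foldl (\<lambda>t i. Node t (Leaf i)) t xs"

lemma rmul_leaves_Nil [simp]: "rmul_leaves t [] = t"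
  and rmul_leaves_Cons [simp]: "rmul_leaves t (x # xs) = rmul_leaves (Node t (Leaf x)) xs"
  and rmul_leaves_append: "rmul_leaves t (xs @ ys) = rmul_leaves (rmul_leaves t xs) ys"
  by (simp_all add: rmul_leaves_def)

lemma leaves_rmul_leaves [simp]: "leaves (rmul_leaves t xs) = leaves t @ xs"
  by (induction xs arbitrary: t) auto

lemma lnorm_Cons [simp]: "lnorm (x # xs) = rmul_leaves (Leaf x) xs"
  by (simp add: rmul_leaves_def)

declare lnorm.simps(2) [simp del]

lemma leaves_lnorm: "xs \<noteq> [] \<Longrightarrow> leaves (lnorm xs) = xs"
  by (cases xs) auto

lemma lnorm_snoc: "xs \<noteq> [] \<Longrightarrow> lnorm (xs @ [k]) = Node (lnorm xs) (Leaf k)"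
  by (cases xs) (auto simp: rmul_leaves_append)

lemma monom_cong_rmul_leaves:
  "monom_cong TYPE('a::field) V s s' \<Longrightarrow> set xs \<subseteq> V
    \<Longrightarrow> monom_cong TYPE('a) V (rmul_leaves s xs) (rmul_leaves s' xs)"
proof (induction xs arbitrary: s s')
  case (Cons x xs)
  then have "monom_cong TYPE('a) V (Node s (Leaf x)) (Node s' (Leaf x))"
    by (intro monom_cong_Node_left) auto
  with Cons show ?case by simp
qed simp

fun right_weight :: "tree \<Rightarrow> nat" where
  "right_weight (Leaf _) = 0"
| "right_weight (Node l r) = right_weight l + right_weight r + length (leaves r)"

lemma monom_cong_lnorm_degree3:
  assumes "length (leaves l) = 3" "set (leaves l) \<subseteq> V" "k \<in> V"
  shows "monom_cong TYPE('a::field_char_0) V (Node l (Leaf k)) (lnorm (leaves l @ [k]))"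
  using assms(1)
proof (cases rule: length_leaves_eq_3)
  case 1
  then show ?thesis by (simp add: monom_cong_refl)
next
  case (2 a b c)
  then show ?thesis
    using assms monom_cong_sym[OF monom_cong_assoc_left_factor[of "Leaf a" V "Leaf b" "Leaf c" "Leaf k"]]
    by simp
qed

text \<open>Induction on the right weight: a right factor that is not a single leaf is moved to
  the left by one reassociation, which needs at least four leaves.\<close>
lemma monom_cong_lnorm:
  "set (leaves t) \<subseteq> V \<Longrightarrow> 4 \<le> length (leaves t)
    \<Longrightarrow> monom_cong TYPE('a::field_char_0) V t (lnorm (leaves t))"
proof (induction t rule: measure_induct_rule[of right_weight])
  case (less t)
  then obtain l r where t: "t = Node l r" by (cases t) auto
  show ?case
  proof (cases r)
    case (Leaf k)
    with less t have lV: "set (leaves l) \<subseteq> V" and kV: "k \<in> V" and "3 \<le> length (leaves l)"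
      by auto
    show ?thesis
    proof (cases "length (leaves l) = 3")
      case True
      with monom_cong_lnorm_degree3[OF True lV kV] show ?thesis using t Leaf by simp
    next
      case False
      with \<open>3 \<le> length (leaves l)\<close> have "monom_cong TYPE('a) V l (lnorm (leaves l))"
        using less.IH[of l] lV t Leaf by simp
      then have "monom_cong TYPE('a) V (Node l (Leaf k)) (Node (lnorm (leaves l)) (Leaf k))"
        by (rule monom_cong_Node_left) (simp add: kV)
      then show ?thesis
        using t Leaf lnorm_snoc[of "leaves l" k] length_leaves_pos[of l] by simp
    qed
  next
    case (Node u v)
    with less t have "monom_cong TYPE('a) V t (Node (Node l u) v)"
      by (auto intro: monom_cong_reassoc)
    moreover have "right_weight (Node (Node l u) v) < right_weight t"
      using t Node length_leaves_pos[of v] by simp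
    then have "monom_cong TYPE('a) V (Node (Node l u) v) (lnorm (leaves (Node (Node l u) v)))"
      using less.prems t Node by (intro less.IH) auto
    ultimately show ?thesis
      using t Node by (auto intro: monom_cong_trans)
  qed
qed

lemma monom_cong_lnorm_swap:
  assumes "set (u @ a # b # c # q) \<subseteq> V"
  shows "monom_cong TYPE('a::field_char_0) V (lnorm (u @ a # b # c # q)) (lnorm (u @ b # a # c # q))"
proof (cases u)
  case Nil
  with assms have "monom_cong TYPE('a) V (Node (Node (Leaf a) (Leaf b)) (Leaf c))
      (Node (Node (Leaf b) (Leaf a)) (Leaf c))"
    by (intro monom_cong_comm) auto
  with Nil assms show ?thesis by (auto intro: monom_cong_rmul_leaves)
next
  case (Cons x u')
  let ?T = "rmul_leaves (Leaf x) u'"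
  from Cons assms have "monom_cong TYPE('a) V (Node (Node (Node ?T (Leaf a)) (Leaf b)) (Leaf c))
      (Node (Node (Node ?T (Leaf b)) (Leaf a)) (Leaf c))"
    by (intro monom_cong_swap) auto
  with Cons assms show ?thesis
    by (auto simp: rmul_leaves_append intro: monom_cong_rmul_leaves)
qed

lemma monom_cong_lnorm_move:
  "q \<noteq> [] \<Longrightarrow> set (u @ a # v @ q) \<subseteq> V
    \<Longrightarrow> monom_cong TYPE('a::field_char_0) V (lnorm (u @ a # v @ q)) (lnorm (u @ v @ a # q))"
proof (induction v arbitrary: u)
  case Nil
  then show ?case by (simp add: monom_cong_refl)
next
  case (Cons b v)
  obtain c q' where cq: "v @ q = c # q'" using Cons(2) by (cases "v @ q") auto
  have "monom_cong TYPE('a) V (lnorm (u @ a # b # c # q')) (lnorm (u @ b # a # c # q'))"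
    using Cons(3) cq by (intro monom_cong_lnorm_swap) auto
  moreover have "monom_cong TYPE('a) V (lnorm ((u @ [b]) @ a # v @ q)) (lnorm ((u @ [b]) @ v @ a # q))"
    using Cons by (intro Cons.IH) auto
  ultimately show ?case using cq by (auto intro: monom_cong_trans)
qed

lemma monom_cong_lnorm_perm:
  "mset w = mset w' \<Longrightarrow> set w \<subseteq> V \<Longrightarrow> k \<in> V
    \<Longrightarrow> monom_cong TYPE('a::field_char_0) V (lnorm (w @ [k])) (lnorm (w' @ [k]))"
proof (induction w arbitrary: w' k rule: rev_induct)
  case Nil
  then show ?case by (simp add: monom_cong_refl)
next
  case (snoc a w)
  then have "a \<in> set w'" by (metis mset_eq_setD in_set_conv_decomp)
  then obtain u v where w': "w' = u @ a # v" by (meson split_list)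
  with snoc.prems have ms: "mset w = mset (u @ v)" by simp
  then have "set (u @ v) = set w" by (metis mset_eq_setD)
  with snoc.prems w' have sV: "set (u @ a # v @ [k]) \<subseteq> V" by auto
  have "monom_cong TYPE('a) V (lnorm (w @ [a, k])) (lnorm (u @ v @ [a, k]))"
  proof (cases "w = []")
    case False
    then have "monom_cong TYPE('a) V (Node (lnorm (w @ [a])) (Leaf k)) (Node (lnorm ((u @ v) @ [a])) (Leaf k))"
      using snoc by (intro monom_cong_Node_left snoc.IH ms) auto
    then show ?thesis using lnorm_snoc[of "w @ [a]" k] lnorm_snoc[of "u @ v @ [a]" k] by simp
  qed (use ms in \<open>simp add: monom_cong_refl\<close>)
  moreover have "monom_cong TYPE('a) V (lnorm (u @ a # v @ [k])) (lnorm (u @ v @ a # [k]))"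
    using monom_cong_lnorm_move[OF _ sV] by simp
  ultimately show ?case
    using w' by (auto intro: monom_cong_trans monom_cong_sym)
qed

section \<open>Spanning\<close>

definition in_span_mod_U :: "nat set \<Rightarrow> tree list \<Rightarrow> 'a::field npoly \<Rightarrow> bool" where
  "in_span_mod_U V B p \<longleftrightarrow> (\<exists>c. pminus p (lin_comb c B) \<in> Uideal V)"

lemma lin_comb_add: "lin_comb (\<lambda>j. c j + d j) B = padd (lin_comb c B) (lin_comb d B)"
  by (auto simp: lin_comb_def padd_def fun_eq_iff sum.distrib[symmetric] intro!: sum.cong)

lemma lin_comb_mult: "lin_comb (\<lambda>j. k * c j) B = psmul k (lin_comb c B)"
  by (auto simp: lin_comb_def psmul_def fun_eq_iff sum_distrib_left intro!: sum.cong)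

lemma lin_comb_indicator:
  assumes "i < length B"
  shows "lin_comb (\<lambda>j. if j = i then 1 else 0) B = (monom (B ! i) :: 'a::ring_1 npoly)"
proof
  fix t
  have "lin_comb (\<lambda>j. if j = i then 1 else 0) B t
      = (\<Sum>j<length B. if j = i then (if B ! i = t then 1 else 0) else (0::'a))"
    unfolding lin_comb_def by (rule sum.cong) auto
  also have "\<dots> = monom (B ! i) t" using assms by (simp add: monom_def eq_commute)
  finally show "lin_comb (\<lambda>j. if j = i then 1 else 0) B t = (monom (B ! i) :: 'a npoly) t" .
qed

lemma in_span_mod_U_monom:
  assumes "t \<in> set B" shows "in_span_mod_U V B (monom t :: 'a::field npoly)"
proof -
  from assms obtain i where "i < length B" "B ! i = t" by (auto simp: in_set_conv_nth)
  then have "pminus (monom t) (lin_comb (\<lambda>j. if j = i then 1 else 0) B) = (\<lambda>_. 0 :: 'a)"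
    by (simp add: lin_comb_indicator pminus_def)
  then show ?thesis
    unfolding in_span_mod_U_def using Uideal.zero by (intro exI[of _ "\<lambda>j. if j = i then 1 else 0"]) simp
qed

lemma in_span_mod_U_padd:
  assumes "in_span_mod_U V B p" "in_span_mod_U V B q" shows "in_span_mod_U V B (padd p q)"
proof -
  from assms obtain c d where "pminus p (lin_comb c B) \<in> Uideal V" "pminus q (lin_comb d B) \<in> Uideal V"
    by (auto simp: in_span_mod_U_def)
  then have "padd (pminus p (lin_comb c B)) (pminus q (lin_comb d B)) \<in> Uideal V"
    by (rule Uideal.add)
  then show ?thesis unfolding in_span_mod_U_def
    by (intro exI[of _ "\<lambda>j. c j + d j"]) (simp add: lin_comb_add npoly_pointwise algebra_simps)
qed

lemma in_span_mod_U_psmul: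
  assumes "in_span_mod_U V B p" shows "in_span_mod_U V B (psmul k p)"
proof -
  from assms obtain c where "pminus p (lin_comb c B) \<in> Uideal V"
    by (auto simp: in_span_mod_U_def)
  then have "psmul k (pminus p (lin_comb c B)) \<in> Uideal V" by (rule Uideal.smul)
  then show ?thesis unfolding in_span_mod_U_def
    by (intro exI[of _ "\<lambda>j. k * c j"]) (simp add: lin_comb_mult npoly_pointwise algebra_simps)
qed

lemma in_span_mod_U_pminus:
  "in_span_mod_U V B p \<Longrightarrow> in_span_mod_U V B q \<Longrightarrow> in_span_mod_U V B (pminus p q)"
  unfolding pminus_eq_padd_psmul by (intro in_span_mod_U_padd in_span_mod_U_psmul)

lemma in_span_mod_U_cong:
  assumes "pminus p q \<in> Uideal V" "in_span_mod_U V B q" shows "in_span_mod_U V B p"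
proof -
  from assms(2) obtain c where "pminus q (lin_comb c B) \<in> Uideal V"
    by (auto simp: in_span_mod_U_def)
  with assms(1) have "padd (pminus p q) (pminus q (lin_comb c B)) \<in> Uideal V"
    by (rule Uideal.add)
  then show ?thesis unfolding in_span_mod_U_def by (intro exI[of _ c]) (simp add: npoly_pointwise)
qed

lemma in_span_mod_U_cong_neg:
  assumes "padd p q \<in> Uideal V" "in_span_mod_U V B q" shows "in_span_mod_U V B p"
proof -
  from assms(1) have "pminus p (psmul (-1) q) \<in> Uideal V" by (simp add: npoly_pointwise)
  then show ?thesis using assms(2) by (rule in_span_mod_U_cong[OF _ in_span_mod_U_psmul])
qed

lemma basisU_ge4:
  "4 \<le> n \<Longrightarrow> basisU n = map (\<lambda>k. lnorm (filter (\<lambda>i. i \<noteq> k) [1..<n+1] @ [k])) [1..<n+1]"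
  by (simp add: basisU_def)

lemma multilinear_length: "multilinear n t \<Longrightarrow> length (leaves t) = n"
  unfolding multilinear_def by (metis card_atLeastAtMost diff_Suc_1 distinct_card)

lemma in_span_basisU_ge4:
  assumes "4 \<le> n" "multilinear n t"
  shows "in_span_mod_U {1..n} (basisU n) (monom t :: 'a::field_char_0 npoly)"
proof -
  obtain w k where wk: "leaves t = w @ [k]"
    using length_leaves_pos[of t] by (metis append_butlast_last_id length_greater_0_conv)
  with assms(2) have "distinct (w @ [k])" and wk_set: "set (w @ [k]) = {1..n}"
    by (auto simp: multilinear_def)
  define f where "f = filter (\<lambda>i. i \<noteq> k) [1..<n+1]"
  have "set w = {1..n} - {k}" "k \<in> {1..n}" using \<open>distinct (w @ [k])\<close> wk_set by auto
  moreover have "set f = {1..n} - {k}" "distinct f" by (auto simp: f_def)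
  ultimately have "mset w = mset f" using \<open>distinct (w @ [k])\<close>
    by (simp add: set_eq_iff_mset_eq_distinct[symmetric])
  then have "monom_cong TYPE('a) {1..n} (lnorm (w @ [k])) (lnorm (f @ [k]))"
    using \<open>set w = _\<close> \<open>k \<in> _\<close> by (intro monom_cong_lnorm_perm) auto
  moreover have "monom_cong TYPE('a) {1..n} t (lnorm (w @ [k]))"
    using monom_cong_lnorm[of t "{1..n}"] assms wk wk_set multilinear_length by fastforce
  moreover have "lnorm (f @ [k]) \<in> set (basisU n)"
    using assms(1) \<open>k \<in> {1..n}\<close> by (auto simp: basisU_ge4 f_def)
  ultimately show ?thesis
    by (meson in_span_mod_U_cong in_span_mod_U_monom monom_cong_trans)
qed

lemma perm3_cases:
  assumes "distinct [a, b, c]" "set [a, b, c] = {1..3::nat}"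
  shows "(a, b, c) \<in> {(1, 2, 3), (1, 3, 2), (2, 1, 3), (2, 3, 1), (3, 1, 2), (3, 2, 1)}"
proof -
  have "a \<in> {1..3}" "b \<in> {1..3}" "c \<in> {1..3}" using assms(2) by auto
  then have "a \<in> {1, 2, 3}" "b \<in> {1, 2, 3}" "c \<in> {1, 2, 3}" by auto
  with assms(1) show ?thesis by auto
qed

lemma perm3_induct:
  assumes "distinct [a, b, c]" "set [a, b, c] = {1..3::nat}" and "P 1 2 3"
    and swap12: "\<And>a b c. {a, b, c} \<subseteq> {1..3} \<Longrightarrow> P a b c \<Longrightarrow> P b a c"
    and swap23: "\<And>a b c. {a, b, c} \<subseteq> {1..3} \<Longrightarrow> P a b c \<Longrightarrow> P a c b"
  shows "P a b c"
proof -
  have "P 2 1 3" using swap12[of 1 2 3] assms(3) by simp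
  have "P 1 3 2" using swap23[of 1 2 3] assms(3) by simp
  have "P 2 3 1" using swap23[of 2 1 3] \<open>P 2 1 3\<close> by simp
  have "P 3 1 2" using swap12[of 1 3 2] \<open>P 1 3 2\<close> by simp
  have "P 3 2 1" using swap23[of 3 1 2] \<open>P 3 1 2\<close> by simp
  with \<open>P 2 1 3\<close> \<open>P 1 3 2\<close> \<open>P 2 3 1\<close> \<open>P 3 1 2\<close> assms(3) show ?thesis
    using perm3_cases[OF assms(1,2)] by auto
qed

lemma multilinear_3_cases:
  assumes "multilinear 3 t"
  obtains a b c where "distinct [a, b, c]" "set [a, b, c] = {1..3}"
    and "t = Node (Node (Leaf a) (Leaf b)) (Leaf c) \<or> t = Node (Leaf a) (Node (Leaf b) (Leaf c))"
proof -
  from assms have "length (leaves t) = 3" by (rule multilinear_length)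
  then show ?thesis
    by (cases rule: length_leaves_eq_3) (use assms that in \<open>auto simp: multilinear_def\<close>)
qed

lemma in_span_mod_U_left_comm:
  assumes "in_span_mod_U V B (monom (Node (Node a b) c) :: 'a::field npoly)"
    and "set (leaves a) \<subseteq> V" "set (leaves b) \<subseteq> V" "set (leaves c) \<subseteq> V"
  shows "in_span_mod_U V B (monom (Node (Node b a) c) :: 'a npoly)"
proof (rule in_span_mod_U_cong)
  show "monom_cong TYPE('a) V (Node (Node b a) c) (Node (Node a b) c)"
    using assms(2-4) by (intro monom_cong_comm)
qed (fact assms(1))

lemma in_span_mod_U_assoc_swap12:
  assumes "in_span_mod_U V B (assoc a b c)" "ncpoly V a" "ncpoly V b" "ncpoly V c"
  shows "in_span_mod_U V B (assoc b a c :: 'a::field npoly)"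
  using U_assoc_skew_left[OF assms(3,2,4)] assms(1) by (rule in_span_mod_U_cong_neg)

lemma in_span_mod_U_assoc_swap23:
  assumes "in_span_mod_U V B (assoc a b c)" "ncpoly V a" "ncpoly V b" "ncpoly V c"
  shows "in_span_mod_U V B (assoc a c b :: 'a::field npoly)"
  using U_assoc_skew_right[OF assms(2,4,3)] assms(1) by (rule in_span_mod_U_cong_neg)

lemma in_span_basisU_3_assoc:
  assumes "distinct [a, b, c]" "set [a, b, c] = {1..3}"
  shows "in_span_mod_U {1..3} (basisU 3)
    (assoc (monom (Leaf a)) (monom (Leaf b)) (monom (Leaf c)) :: 'a::field npoly)"
proof -
  let ?sp = "in_span_mod_U {1..3} (basisU 3) :: 'a npoly \<Rightarrow> bool"
  let ?A = "\<lambda>a b c. assoc (monom (Leaf a)) (monom (Leaf b)) (monom (Leaf c)) :: 'a npoly"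
  have "?sp (monom (Node (Node (Leaf 1) (Leaf 3)) (Leaf 2)))"
    by (rule in_span_mod_U_monom) (simp add: basisU_def)
  then have "?sp (monom (Node (Node (Leaf 3) (Leaf 1)) (Leaf 2)))"
    by (rule in_span_mod_U_left_comm) auto
  moreover have "?sp (monom (Node (Leaf 3) (Node (Leaf 1) (Leaf 2))))"
    by (rule in_span_mod_U_monom) (simp add: basisU_def)
  ultimately have "?sp (?A 3 1 2)"
    unfolding assoc_def pmul_monom by (rule in_span_mod_U_pminus)
  then have "?sp (?A 1 3 2)" by (rule in_span_mod_U_assoc_swap12) (auto intro: ncpoly_monom)
  then have "?sp (?A 1 2 3)" by (rule in_span_mod_U_assoc_swap23) (auto intro: ncpoly_monom)
  with assms show ?thesis
  proof (rule perm3_induct[where P = "\<lambda>a b c. ?sp (?A a b c)"])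
    fix a b c :: nat
    assume "{a, b, c} \<subseteq> {1..3}" "?sp (?A a b c)"
    then show "?sp (?A b a c)"
      by (intro in_span_mod_U_assoc_swap12[OF \<open>?sp (?A a b c)\<close>] ncpoly_monom) auto
  next
    fix a b c :: nat
    assume "{a, b, c} \<subseteq> {1..3}" "?sp (?A a b c)"
    then show "?sp (?A a c b)"
      by (intro in_span_mod_U_assoc_swap23[OF \<open>?sp (?A a b c)\<close>] ncpoly_monom) auto
  qed
qed

text \<open>In degree 3, \<open>(ab)c\<close> depends only on \<open>{a, b}\<close> and \<open>c\<close>, the associator is alternating,
  and \<open>a(bc) = (ab)c - (a, b, c)\<close>.\<close>
lemma in_span_basisU_3:
  assumes "multilinear 3 t"
  shows "in_span_mod_U {1..3} (basisU 3) (monom t :: 'a::field npoly)"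
proof -
  let ?sp = "in_span_mod_U {1..3} (basisU 3) :: 'a npoly \<Rightarrow> bool"
  let ?A = "\<lambda>a b c. assoc (monom (Leaf a)) (monom (Leaf b)) (monom (Leaf c)) :: 'a npoly"
  have basis: "?sp (monom (Node (Node (Leaf 1) (Leaf 2)) (Leaf 3)))"
    "?sp (monom (Node (Node (Leaf 1) (Leaf 3)) (Leaf 2)))"
    "?sp (monom (Node (Leaf 3) (Node (Leaf 2) (Leaf 1))))"
    by (auto intro: in_span_mod_U_monom simp: basisU_def)
  have "?sp (?A 3 2 1)" by (rule in_span_basisU_3_assoc) auto
  then have "?sp (padd (?A 3 2 1) (monom (Node (Leaf 3) (Node (Leaf 2) (Leaf 1)))))"
    using basis(3) by (rule in_span_mod_U_padd)
  then have "?sp (monom (Node (Node (Leaf 3) (Leaf 2)) (Leaf 1)))"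
    by (simp add: assoc_def pmul_monom npoly_pointwise)
  then have "?sp (monom (Node (Node (Leaf 2) (Leaf 3)) (Leaf 1)))"
    by (rule in_span_mod_U_left_comm) auto
  moreover have "?sp (monom (Node (Node (Leaf 2) (Leaf 1)) (Leaf 3)))"
    using basis(1) by (rule in_span_mod_U_left_comm) auto
  moreover have "?sp (monom (Node (Node (Leaf 3) (Leaf 1)) (Leaf 2)))"
    using basis(2) by (rule in_span_mod_U_left_comm) auto
  ultimately have left: "?sp (monom (Node (Node (Leaf a) (Leaf b)) (Leaf c)))"
    if "distinct [a, b, c]" "set [a, b, c] = {1..3}" for a b c
    using perm3_cases[OF that] basis(1,2) \<open>?sp (monom (Node (Node (Leaf 3) (Leaf 2)) (Leaf 1)))\<close>
    by auto
  have right: "?sp (monom (Node (Leaf a) (Node (Leaf b) (Leaf c))))"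
    if "distinct [a, b, c]" "set [a, b, c] = {1..3}" for a b c
  proof -
    have "?sp (pminus (monom (Node (Node (Leaf a) (Leaf b)) (Leaf c))) (?A a b c))"
      using left[OF that] in_span_basisU_3_assoc[OF that] by (rule in_span_mod_U_pminus)
    then show ?thesis by (simp add: assoc_def pmul_monom npoly_pointwise)
  qed
  from assms obtain a b c where abc: "distinct [a, b, c]" "set [a, b, c] = {1..3}"
    and "t = Node (Node (Leaf a) (Leaf b)) (Leaf c) \<or> t = Node (Leaf a) (Node (Leaf b) (Leaf c))"
    by (rule multilinear_3_cases)
  with left[OF abc] right[OF abc] show ?thesis by auto
qed

lemma multilinear_in_basisU_le2:
  assumes "multilinear n t" "n = 1 \<or> n = 2"
  shows "t \<in> set (basisU n)"
  using assms(2)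
proof
  assume n: "n = 1"
  with assms(1) have "length (leaves t) = 1" by (simp add: multilinear_length)
  then obtain a where "t = Leaf a"
    using length_leaves_eq_1 by blast
  with assms(1) n show ?thesis by (simp add: multilinear_def basisU_def)
next
  assume n: "n = 2"
  with assms(1) have "length (leaves t) = 2" by (simp add: multilinear_length)
  then obtain a b where t: "t = Node (Leaf a) (Leaf b)"
    using length_leaves_eq_2 by blast
  with assms(1) n have "a \<in> {1..2}" "b \<in> {1..2}" "a \<noteq> b"
    by (auto simp: multilinear_def)
  then have "a = 1 \<and> b = 2 \<or> a = 2 \<and> b = 1" by auto
  with t n show ?thesis by (auto simp: basisU_def)
qed

lemma in_span_basisU:
  assumes "1 \<le> n" "multilinear n t"
  shows "in_span_mod_U {1..n} (basisU n) (monom t :: 'a::field_char_0 npoly)"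
proof -
  consider "n = 1 \<or> n = 2" | "n = 3" | "4 \<le> n" using assms(1) by linarith
  then show ?thesis
  proof cases
    case 1
    then show ?thesis using assms(2) by (intro in_span_mod_U_monom multilinear_in_basisU_le2)
  next
    case 2
    then show ?thesis using assms(2) in_span_basisU_3 by blast
  next
    case 3
    then show ?thesis using assms(2) by (rule in_span_basisU_ge4)
  qed
qed

lemma multilinear_basisU:
  assumes "1 \<le> n" "b \<in> set (basisU n)"
  shows "multilinear n b"
proof -
  consider "n = 1" | "n = 2" | "n = 3" | "4 \<le> n" using assms(1) by linarith
  then show ?thesis
  proof cases
    case 4
    with assms(2) obtain k where "k \<in> set [1..<n+1]"
      and "b = lnorm (filter (\<lambda>i. i \<noteq> k) [1..<n+1] @ [k])"
      unfolding basisU_ge4[OF 4] set_map by blast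
    then show ?thesis by (auto simp: multilinear_def leaves_lnorm)
  qed (use assms(2) in \<open>auto simp: multilinear_def basisU_def\<close>)
qed

section \<open>Algebras in \<open>U\<close> and evaluation\<close>

locale U_algebra = module scale
  for scale :: "'a::field \<Rightarrow> 'b::ab_group_add \<Rightarrow> 'b" +
  fixes mult :: "'b \<Rightarrow> 'b \<Rightarrow> 'b"
  assumes mult_add_left: "mult (x + y) z = mult x z + mult y z"
    and mult_add_right: "mult x (y + z) = mult x y + mult x z"
    and mult_scale_left: "mult (scale c x) y = scale c (mult x y)"
    and mult_scale_right: "mult x (scale c y) = scale c (mult x y)"
    and left_alternative: "mult (mult x x) y = mult x (mult x y)"
    and right_alternative: "mult (mult x y) y = mult x (mult y y)"
    and left_commutative: "mult (mult x y) z = mult (mult y x) z"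
begin

lemma mult_zero_left [simp]: "mult 0 y = 0"
  using mult_add_left[of 0 0 y] by simp

lemma mult_zero_right [simp]: "mult x 0 = 0"
  using mult_add_right[of x 0 0] by simp

lemma mult_sum_left: "mult (sum f A) y = (\<Sum>i\<in>A. mult (f i) y)"
  by (induction A rule: infinite_finite_induct) (auto simp: mult_add_left)

lemma mult_sum_right: "mult x (sum f A) = (\<Sum>i\<in>A. mult x (f i))"
  by (induction A rule: infinite_finite_induct) (auto simp: mult_add_right)

primrec tree_eval :: "(nat \<Rightarrow> 'b) \<Rightarrow> tree \<Rightarrow> 'b" where
  "tree_eval \<sigma> (Leaf i) = \<sigma> i"
| "tree_eval \<sigma> (Node l r) = mult (tree_eval \<sigma> l) (tree_eval \<sigma> r)"

definition poly_eval :: "(nat \<Rightarrow> 'b) \<Rightarrow> 'a npoly \<Rightarrow> 'b" where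
  "poly_eval \<sigma> p = (\<Sum>t\<in>{t. p t \<noteq> 0}. scale (p t) (tree_eval \<sigma> t))"

lemma poly_eval_superset:
  assumes "finite S" "{t. p t \<noteq> 0} \<subseteq> S"
  shows "poly_eval \<sigma> p = (\<Sum>t\<in>S. scale (p t) (tree_eval \<sigma> t))"
  unfolding poly_eval_def by (rule sum.mono_neutral_left) (use assms in auto)

lemma poly_eval_padd:
  assumes "finite {t. p t \<noteq> 0}" "finite {t. q t \<noteq> 0}"
  shows "poly_eval \<sigma> (padd p q) = poly_eval \<sigma> p + poly_eval \<sigma> q"
proof -
  let ?S = "{t. p t \<noteq> 0} \<union> {t. q t \<noteq> 0}"
  have S: "finite ?S" using assms by simp
  have "poly_eval \<sigma> (padd p q) = (\<Sum>t\<in>?S. scale (padd p q t) (tree_eval \<sigma> t))"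
    using S by (rule poly_eval_superset) (auto simp: padd_def)
  also have "\<dots> = (\<Sum>t\<in>?S. scale (p t) (tree_eval \<sigma> t)) + (\<Sum>t\<in>?S. scale (q t) (tree_eval \<sigma> t))"
    by (simp add: padd_def scale_left_distrib sum.distrib)
  also have "\<dots> = poly_eval \<sigma> p + poly_eval \<sigma> q"
    using poly_eval_superset[OF S, of p] poly_eval_superset[OF S, of q] by auto
  finally show ?thesis .
qed

lemma poly_eval_psmul:
  assumes "finite {t. p t \<noteq> 0}"
  shows "poly_eval \<sigma> (psmul c p) = scale c (poly_eval \<sigma> p)"
proof -
  have "poly_eval \<sigma> (psmul c p) = (\<Sum>t\<in>{t. p t \<noteq> 0}. scale (psmul c p t) (tree_eval \<sigma> t))"
    using assms by (rule poly_eval_superset) (auto simp: psmul_def)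
  also have "\<dots> = scale c (poly_eval \<sigma> p)"
    by (simp add: poly_eval_def psmul_def scale_sum_right)
  finally show ?thesis .
qed

lemma poly_eval_pminus:
  assumes "finite {t. p t \<noteq> 0}" "finite {t. q t \<noteq> 0}"
  shows "poly_eval \<sigma> (pminus p q) = poly_eval \<sigma> p - poly_eval \<sigma> q"
proof -
  have "finite {t. psmul (-1) q t \<noteq> 0}"
    using assms(2) by (rule finite_subset[rotated]) (auto simp: psmul_def)
  with assms show ?thesis by (simp add: pminus_eq_padd_psmul poly_eval_padd poly_eval_psmul)
qed

lemma poly_eval_pmul:
  assumes "finite {t. p t \<noteq> 0}" "finite {t. q t \<noteq> 0}"
  shows "poly_eval \<sigma> (pmul p q) = mult (poly_eval \<sigma> p) (poly_eval \<sigma> q)"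
proof -
  let ?A = "{t. p t \<noteq> 0}" and ?B = "{t. q t \<noteq> 0}"
  have inj: "inj_on (\<lambda>(l, r). Node l r) (?A \<times> ?B)" by (auto simp: inj_on_def)
  have "poly_eval \<sigma> (pmul p q)
      = (\<Sum>t\<in>(\<lambda>(l, r). Node l r) ` (?A \<times> ?B). scale (pmul p q t) (tree_eval \<sigma> t))"
    using assms by (intro poly_eval_superset support_pmul_subset) auto
  also have "\<dots> = (\<Sum>x\<in>?A \<times> ?B.
      scale (p (fst x) * q (snd x)) (mult (tree_eval \<sigma> (fst x)) (tree_eval \<sigma> (snd x))))"
    by (subst sum.reindex[OF inj]) (auto simp: pmul_def intro!: sum.cong)
  also have "\<dots> = (\<Sum>l\<in>?A. \<Sum>r\<in>?B. mult (scale (p l) (tree_eval \<sigma> l)) (scale (q r) (tree_eval \<sigma> r)))"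
    by (simp add: sum.cartesian_product case_prod_beta mult_scale_left mult_scale_right mult.commute)
  also have "\<dots> = mult (poly_eval \<sigma> p) (poly_eval \<sigma> q)"
    by (simp only: poly_eval_def mult_sum_left) (simp only: mult_sum_right)
  finally show ?thesis .
qed

lemma poly_eval_Uideal: "p \<in> Uideal V \<Longrightarrow> poly_eval \<sigma> p = 0"
proof (induction rule: Uideal.induct)
  case (alt_left a b)
  then show ?case
    by (simp add: ncpoly_def assoc_def poly_eval_pminus poly_eval_pmul finite_support_pmul
        left_alternative)
next
  case (alt_right a b)
  then show ?case
    by (simp add: ncpoly_def assoc_def poly_eval_pminus poly_eval_pmul finite_support_pmul
        right_alternative)
next
  case (comm_left a b c)
  then show ?case
    by (simp add: ncpoly_def poly_eval_pminus poly_eval_pmul finite_support_pmul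
        left_commutative[of "poly_eval \<sigma> a"])
next
  case zero
  then show ?case by (simp add: poly_eval_def)
next
  case (add p q)
  then show ?case by (simp add: poly_eval_padd finite_support_Uideal)
next
  case (smul p c)
  then show ?case by (simp add: poly_eval_psmul finite_support_Uideal)
next
  case (lmul p r)
  then show ?case by (simp add: poly_eval_pmul finite_support_Uideal ncpoly_finite)
next
  case (rmul p r)
  then show ?case by (simp add: poly_eval_pmul finite_support_Uideal ncpoly_finite)
qed

lemma poly_eval_lin_comb:
  "poly_eval \<sigma> (lin_comb c B) = (\<Sum>j<length B. scale (c j) (tree_eval \<sigma> (B ! j)))"
proof -
  have "{t. lin_comb c B t \<noteq> 0} \<subseteq> set B"
  proof
    fix t assume "t \<in> {t. lin_comb c B t \<noteq> 0}"
    then obtain j where "j < length B" "B ! j = t"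
      unfolding lin_comb_def by (auto elim: sum.not_neutral_contains_not_neutral split: if_splits)
    then show "t \<in> set B" by auto
  qed
  then have "poly_eval \<sigma> (lin_comb c B) = (\<Sum>t\<in>set B. scale (lin_comb c B t) (tree_eval \<sigma> t))"
    by (intro poly_eval_superset) auto
  also have "\<dots> = (\<Sum>j<length B. \<Sum>t\<in>set B. scale (if B ! j = t then c j else 0) (tree_eval \<sigma> t))"
    by (simp add: lin_comb_def scale_sum_left sum.swap[where A = "set B"])
  also have "\<dots> = (\<Sum>j<length B. scale (c j) (tree_eval \<sigma> (B ! j)))"
    by (intro sum.cong) (auto simp: if_distrib[of "\<lambda>a. scale a _"] sum.delta cong: if_cong)
  finally show ?thesis .
qed

end

section \<open>Linear independence\<close>

definition pair_scale :: "'a::field \<Rightarrow> 'a \<times> 'a \<Rightarrow> 'a \<times> 'a" where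
  "pair_scale c u = (c * fst u, c * snd u)"

definition pair_mult :: "'a::field \<times> 'a \<Rightarrow> 'a \<times> 'a \<Rightarrow> 'a \<times> 'a" where
  "pair_mult u v = (fst u * fst v, fst u * snd v)"

interpretation pair: U_algebra pair_scale pair_mult
  by unfold_locales (auto simp: pair_scale_def pair_mult_def algebra_simps)

lemma pair_tree_eval:
  "pair.tree_eval \<sigma> t = ((\<Prod>i\<leftarrow>leaves t. fst (\<sigma> i)),
     (\<Prod>i\<leftarrow>butlast (leaves t). fst (\<sigma> i)) * snd (\<sigma> (last (leaves t))))"
proof (induction t)
  case (Node l r)
  have "leaves r \<noteq> []" using length_leaves_pos[of r] by auto
  with Node show ?case by simp (simp add: pair_mult_def butlast_append mult.assoc)
qed simp

definition letter_indicator :: "nat \<Rightarrow> nat \<Rightarrow> 'a::field \<times> 'a" where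
  "letter_indicator k i = (if i = k then (0, 1) else (1, 0))"

lemma snd_pair_tree_eval_letter_indicator:
  assumes "distinct (leaves t)"
  shows "snd (pair.tree_eval (letter_indicator k) t) = (if last (leaves t) = k then 1 else (0::'a::field))"
proof -
  have prod: "(\<Prod>i\<leftarrow>xs. fst (letter_indicator k i :: 'a \<times> 'a)) = (if k \<in> set xs then 0 else 1)" for xs
    by (induction xs) (auto simp: letter_indicator_def)
  have "leaves t = butlast (leaves t) @ [last (leaves t)]"
    using length_leaves_pos[of t] by simp
  with assms have "last (leaves t) \<notin> set (butlast (leaves t))"
    by (metis distinct_append disjoint_iff list.set_intros(1))
  then show ?thesis
    by (simp add: pair_tree_eval prod) (auto simp: letter_indicator_def)
qed

lemma lin_comb_Uideal_last_letter:
  assumes "lin_comb c B \<in> Uideal V" "\<forall>b\<in>set B. distinct (leaves b)"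
  shows "(\<Sum>j<length B. if last (leaves (B ! j)) = k then c j else 0) = (0::'a::field)"
proof -
  have "(\<Sum>j<length B. if last (leaves (B ! j)) = k then c j else 0)
      = snd (pair.poly_eval (letter_indicator k) (lin_comb c B) :: 'a \<times> 'a)"
    using assms(2)
    by (auto simp: pair.poly_eval_lin_comb snd_sum pair_scale_def snd_pair_tree_eval_letter_indicator
        intro!: sum.cong)
  also have "\<dots> = 0" using assms(1) by (simp add: pair.poly_eval_Uideal)
  finally show ?thesis .
qed

lemma lin_comb_Uideal_coeff_eq_0:
  assumes "lin_comb c B \<in> Uideal V" "\<forall>b\<in>set B. distinct (leaves b)"
    and "distinct (map (\<lambda>b. last (leaves b)) B)" "j < length B"
  shows "c j = (0::'a::field)"
proof -
  have "(last (leaves (B ! i)) = last (leaves (B ! j))) = (i = j)" if "i < length B" for i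
    using nth_eq_iff_index_eq[OF assms(3), of i j] that assms(4) by simp
  then have "(\<Sum>i<length B. if last (leaves (B ! i)) = last (leaves (B ! j)) then c i else 0)
      = (\<Sum>i<length B. if i = j then c i else 0)"
    by (intro sum.cong) auto
  also have "\<dots> = c j" using assms(4) by simp
  finally show ?thesis using lin_comb_Uideal_last_letter[OF assms(1,2)] by simp
qed

fun scale3 :: "'a::field \<Rightarrow> 'a \<times> 'a \<times> 'a \<Rightarrow> 'a \<times> 'a \<times> 'a" where
  "scale3 c (u1, u2, u3) = (c * u1, c * u2, c * u3)"

fun cross3 :: "'a::field \<times> 'a \<times> 'a \<Rightarrow> 'a \<times> 'a \<times> 'a \<Rightarrow> 'a \<times> 'a \<times> 'a" where
  "cross3 (u1, u2, u3) (v1, v2, v3) = (u2 * v3 - u3 * v2, u3 * v1 - u1 * v3, u1 * v2 - u2 * v1)"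

fun dot3 :: "'a::field \<times> 'a \<times> 'a \<Rightarrow> 'a \<times> 'a \<times> 'a \<Rightarrow> 'a" where
  "dot3 (u1, u2, u3) (v1, v2, v3) = u1 * v1 + u2 * v2 + u3 * v3"

type_synonym 'a vec_alg = "('a \<times> 'a \<times> 'a) \<times> ('a \<times> 'a \<times> 'a) \<times> 'a"

fun vec_scale :: "'a::field \<Rightarrow> 'a vec_alg \<Rightarrow> 'a vec_alg" where
  "vec_scale c (u, v, s) = (scale3 c u, scale3 c v, c * s)"

text \<open>All products of three elements vanish except \<open>x(yz)\<close>, which is the determinant of the
  first components placed in the last coordinate; so the associator is alternating and \<open>(xy)z = 0\<close>.\<close>
fun vec_mult :: "'a::field vec_alg \<Rightarrow> 'a vec_alg \<Rightarrow> 'a vec_alg" where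
  "vec_mult (u, v, s) (u', v', s') = (0, cross3 u u', dot3 u v')"

interpretation vec: U_algebra vec_scale vec_mult
  by unfold_locales (simp_all add: split_paired_all algebra_simps zero_prod_def)

definition vec_generator :: "nat \<Rightarrow> 'a::field vec_alg" where
  "vec_generator i = (if i = 1 then ((1, 0, 0), 0, 0) else if i = 2 then ((0, 1, 0), 0, 0)
     else if i = 3 then ((0, 0, 1), 0, 0) else 0)"

lemma basisU_3_independent:
  assumes "lin_comb c (basisU 3) \<in> Uideal {1..3}" "j < length (basisU 3)"
  shows "c j = (0::'a::field)"
proof -
  have distinct: "\<forall>b\<in>set (basisU 3). distinct (leaves b)" by (simp add: basisU_def)
  have "c 0 = 0" "c 1 + c 2 = 0" "c 3 = 0"
    using lin_comb_Uideal_last_letter[OF assms(1) distinct, of 3]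
      lin_comb_Uideal_last_letter[OF assms(1) distinct, of 2]
      lin_comb_Uideal_last_letter[OF assms(1) distinct, of 1]
    by (simp_all add: basisU_def numeral_eq_Suc lessThan_Suc add.commute)
  moreover have "c 2 - c 3 = 0"
    using arg_cong[OF vec.poly_eval_Uideal[OF assms(1), of vec_generator], of "\<lambda>x. snd (snd x)"]
    by (simp add: vec.poly_eval_lin_comb basisU_def numeral_eq_Suc lessThan_Suc vec_generator_def
        zero_prod_def)
  ultimately show ?thesis using assms(2) by (auto simp: basisU_def less_Suc_eq numeral_eq_Suc)
qed

lemma distinct_last_letters_basisU:
  "n \<noteq> 3 \<Longrightarrow> distinct (map (\<lambda>b. last (leaves b)) (basisU n))"
  by (simp add: basisU_def leaves_lnorm comp_def del: upt_Suc)

lemma basisU_independent: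
  assumes "1 \<le> n" "lin_comb c (basisU n) \<in> Uideal {1..n}" "j < length (basisU n)"
  shows "c j = (0::'a::field)"
proof (cases "n = 3")
  case True
  with assms show ?thesis using basisU_3_independent by blast
next
  case False
  have "\<forall>b\<in>set (basisU n). distinct (leaves b)"
    using multilinear_basisU[OF assms(1)] by (simp add: multilinear_def)
  from lin_comb_Uideal_coeff_eq_0[OF assms(2) this distinct_last_letters_basisU[OF False] assms(3)]
  show ?thesis .
qed

theorem mainTheorem2:
  fixes n :: nat
  assumes "n \<ge> 1"
  shows "(\<forall>b \<in> set (basisU n). multilinear n b)
     \<and> (\<forall>c :: nat \<Rightarrow> 'a::field_char_0.
          lin_comb c (basisU n) \<in> Uideal {1..n} \<longrightarrow> (\<forall>j < length (basisU n). c j = 0))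
     \<and> (\<forall>t. multilinear n t \<longrightarrow>
          (\<exists>c :: nat \<Rightarrow> 'a. pminus (monom t) (lin_comb c (basisU n)) \<in> Uideal {1..n}))"
  using multilinear_basisU[OF assms] basisU_independent[OF assms] in_span_basisU[OF assms]
  unfolding in_span_mod_U_def by blast

end
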